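(* Let $2\le n<m$, $Q=\sum_{i\in[m]}q_i\mathrm B(\sigma_i)\in\mathbb B_m^*$ with all $q_i>0$ and $0\le\sigma_1<\cdots<\sigma_m\le1/2$, and let $D=D_Q(i_2,\dots,i_n;s_2,\dots,s_n)=\sum_{j\in[n]}p_j\mathrm B(\varepsilon_j)$ be a $2n$-P$^*$-degradation of $Q$ (so $0\le\varepsilon_1<\cdots<\varepsilon_n\le1/2$). Let $2\le k\le n$. 1. If $\varepsilon_{k-1}=0$, then $k=2$, $\sigma_1=0$, $p_1=q_1$, and the splitting pattern $(i_2,s_2)$ is $(2,q_2)$ or, equivalently, $(1,0)$ (i.e. the first block consists exactly of $q_1\mathrm B(\sigma_1)$). 2. If $\varepsilon_k=1/2$, then $k=n$, $\sigma_m=1/2$, $p_n=q_m$, and the splitting pattern $(i_n,s_n)$ is $(m-1,0)$ or, equivalently, $(m,q_m)$ (i.e. the last block consists exactly of $q_m\mathrm B(\sigma_m)$). 3. Suppose $0<\varepsilon_{k-1}<\varepsilon_k<1/2$. (a) If $s_k>0$ and $\sigma_{i_k}\le\phi(\varepsilon_{k-1},\varepsilon_k)$, then the channel $D'$ obtained from $D$ by replacing $s_k$ with $0$ (all other splitting patterns unchanged) satisfies $I(D')>I(D)$. (b) If $s_k<q_{i_k}$ and $\sigma_{i_k}\ge\phi(\varepsilon_{k-1},\varepsilon_k)$, then the channel $D''$ obtained from $D$ by replacing $s_k$ with $q_{i_k}$ satisfies $I(D'')>I(D)$.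
   Context: A BIDMC $W$ has input uniform on $\{0,1\}$, discrete output alphabet $\mathcal Y$ and transition probabilities $\Pr(y\mid x)$; its LR-profile is $P_W(\varepsilon)=\Pr\big(\mathcal L_W(y)=\varepsilon/(1-\varepsilon)\big)$ with $\mathcal L_W(\hat y)=\Pr(y=\hat y\mid x=0)/\Pr(y=\hat y\mid x=1)$, and $W\cong W'$ if LR-profiles coincide; channel identities are up to $\cong$. $W'\preccurlyeq W$ if there is a channel $T$ from the output alphabet of $W$ to that of $W'$ with $\Pr(y'\mid x'=a)=\sum_{y}\Pr(y\mid x=a)T(y'\mid y)$. $\mathrm B(\varepsilon)$ is the BSC with crossover probability $\varepsilon$; $\sum_iq_iW_i$ denotes the random switching channel (use $W_i$ with probability $q_i$ independently of the input and output the index $i$ along with the output). $\mathbb B_n$ is the set of BIDMCs equivalent to $\sum_{i\in[n]}p_i\mathrm B(\varepsilon_i)$ for a probability vector $(p_i)$ and $\varepsilon_i\in[0,1]$; $\mathbb B_n^*=\mathbb B_n\setminus\mathbb B_{n-1}$. $P_\epsilon(W)=\frac12\sum_{y}\min\{\Pr(y\mid x=0),\Pr(y\mid x=1)\}$; $I(W)$ is the symmetric capacity (mutual information between uniform input and output, base-2 logarithms); for $\sum_ip_i\mathrm B(\varepsilon_i)$ it equals $1-\sum_ip_ih(\varepsilon_i)$ with $h$ the binary entropy function. For a symmetric BIDMC $Q$ and $n\ge1$, $W$ is a $2n$-P-degradation of $Q$ if $W\in\mathbb B_n$, $W\preccurlyeq Q$ and $P_\epsilon(W)=\min\{P_\epsilon(W'):W'\in\mathbb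 B_n,\ W'\preccurlyeq Q\}$. Construction of $D_Q$: put $q_0=q_{m+1}=0$. Given integers $1\le i_2<\cdots<i_n\le m$ and reals $s_j\in[0,q_{i_j}]$, set $i_1=0$, $s_1=0$, $i_{n+1}=m+1$, $s_{n+1}=0$, and for $j\in[n]$ $$p_j=s_j+(q_{i_{j+1}}-s_{j+1})+\sum_{i_j<i<i_{j+1}}q_i,\qquad p_j\varepsilon_j=s_j\sigma_{i_j}+(q_{i_{j+1}}-s_{j+1})\sigma_{i_{j+1}}+\sum_{i_j<i<i_{j+1}}q_i\sigma_i$$ (terms with weight $0$ contribute $0$). Then $D_Q(i_2,\dots,i_n;s_2,\dots,s_n)=\sum_{j\in[n]:p_j>0}p_j\mathrm B(\varepsilon_j)$; the pairs $(i_j,s_j)$ are its splitting patterns. Such a channel is a $2n$-P$^*$-degradation of $Q$ if (i) all $p_j>0$ and $0\le\varepsilon_1<\cdots<\varepsilon_n\le1/2$; (ii) it is a $2n$-P-degradation of $Q$; (iii) for every $j\in[n]$ with $i_{j+1}=i_j+1$: if $s_j=0$ then $s_{j+1}=0$, and if $s_{j+1}=q_{i_{j+1}}$ then $s_j=q_{i_j}$. For $0<\varepsilon_1<\varepsilon_2<1/2$, $\phi(\varepsilon_1,\varepsilon_2)=\ln\big((1-\varepsilon_1)/(1-\varepsilon_2)\big)\big/\ln\big(((1-\varepsilon_1)\varepsilon_2)/((1-\varepsilon_2)\varepsilon_1)\big)$. *)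

theory Defs
  imports Complex_Main
begin

text \<open>A BIDMC is represented as W :: nat => nat => real with W x y = Pr(y | x),
  inputs x in {0,1}, outputs natural numbers (any finite output alphabet embeds into nat).\<close>

type_synonym bidmc = "nat \<Rightarrow> nat \<Rightarrow> real"

definition supp :: "bidmc \<Rightarrow> nat set" where
  "supp W = {y. W 0 y \<noteq> 0 \<or> W 1 y \<noteq> 0}"

definition is_bidmc :: "bidmc \<Rightarrow> bool" where
  "is_bidmc W \<longleftrightarrow> (\<forall>x\<in>{0,1}. \<forall>y. 0 \<le> W x y) \<and> finite (supp W)
     \<and> (\<forall>x\<in>{0,1}. sum (W x) (supp W) = 1)"

text \<open>LR-profile: P_W(e) = Pr(L_W(y) = e/(1-e)) with uniform input, e in [0,1];
  the event L_W(y) = e/(1-e) is written without division as W 0 y (1-e) = W 1 y e.\<close>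
definition lr_profile :: "bidmc \<Rightarrow> real \<Rightarrow> real" where
  "lr_profile W e = (\<Sum>y\<in>supp W. if W 0 y * (1 - e) = W 1 y * e then (W 0 y + W 1 y) / 2 else 0)"

definition chan_equiv :: "bidmc \<Rightarrow> bidmc \<Rightarrow> bool" where
  "chan_equiv W W' \<longleftrightarrow> (\<forall>e\<in>{0..1}. lr_profile W e = lr_profile W' e)"

definition degraded :: "bidmc \<Rightarrow> bidmc \<Rightarrow> bool" where
  "degraded W' W \<longleftrightarrow> (\<exists>T :: nat \<Rightarrow> nat \<Rightarrow> real.
      (\<forall>y y'. 0 \<le> T y y')
    \<and> (\<forall>y\<in>supp W. finite {y'. T y y' \<noteq> 0} \<and> sum (T y) {y'. T y y' \<noteq> 0} = 1)
    \<and> (\<forall>a\<in>{0,1}. \<forall>y'. W' a y' = (\<Sum>y\<in>supp W. W a y * T y y')))"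

text \<open>Random switching channel sum_{i in [n]} p_i B(e_i) (indices 1..n);
  output 2*i + b encodes (index i, BSC output b).\<close>
definition bsc_mix :: "nat \<Rightarrow> (nat \<Rightarrow> real) \<Rightarrow> (nat \<Rightarrow> real) \<Rightarrow> bidmc" where
  "bsc_mix n p e x y = (if 1 \<le> y div 2 \<and> y div 2 \<le> n
      then p (y div 2) * (if y mod 2 = x then 1 - e (y div 2) else e (y div 2)) else 0)"

definition prob_vec :: "nat \<Rightarrow> (nat \<Rightarrow> real) \<Rightarrow> bool" where
  "prob_vec n p \<longleftrightarrow> (\<forall>i\<in>{1..n}. 0 \<le> p i) \<and> sum p {1..n} = 1"

definition BB :: "nat \<Rightarrow> bidmc set" where
  "BB n = {W. is_bidmc W \<and> (\<exists>p e. prob_vec n p \<and> (\<forall>i\<in>{1..n}. 0 \<le> e i \<and> e i \<le> 1)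
                 \<and> chan_equiv W (bsc_mix n p e))}"

definition Pe :: "bidmc \<Rightarrow> real" where
  "Pe W = (1/2) * (\<Sum>y\<in>supp W. min (W 0 y) (W 1 y))"

definition sym_cap :: "bidmc \<Rightarrow> real" where
  "sym_cap W = (\<Sum>y\<in>supp W. \<Sum>x\<in>{0,1::nat}.
      if W x y = 0 then 0 else (1/2) * W x y * log 2 (W x y / ((W 0 y + W 1 y) / 2)))"

text \<open>2n-P-degradation (the minimum is expressed as: Pe W is a lower bound and W is feasible).\<close>
definition is_P_deg :: "nat \<Rightarrow> bidmc \<Rightarrow> bidmc \<Rightarrow> bool" where
  "is_P_deg n Q W \<longleftrightarrow> W \<in> BB n \<and> degraded W Q
     \<and> (\<forall>W'\<in>BB n. degraded W' Q \<longrightarrow> Pe W \<le> Pe W')"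

text \<open>Construction D_Q. q, sigma indexed 1..m; q_0 = q_{m+1} = 0.
  i, s are given for indices 2..n; they are extended by i_1 = 0, s_1 = 0, i_{n+1} = m+1, s_{n+1} = 0.\<close>
definition qq :: "nat \<Rightarrow> (nat \<Rightarrow> real) \<Rightarrow> nat \<Rightarrow> real" where
  "qq m q l = (if 1 \<le> l \<and> l \<le> m then q l else 0)"

definition ext_i :: "nat \<Rightarrow> nat \<Rightarrow> (nat \<Rightarrow> nat) \<Rightarrow> nat \<Rightarrow> nat" where
  "ext_i m n i j = (if j = 1 then 0 else if j = n + 1 then m + 1 else i j)"

definition ext_s :: "nat \<Rightarrow> (nat \<Rightarrow> real) \<Rightarrow> nat \<Rightarrow> real" where
  "ext_s n s j = (if j = 1 \<or> j = n + 1 then 0 else s j)"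

definition dq_p :: "nat \<Rightarrow> nat \<Rightarrow> (nat \<Rightarrow> real) \<Rightarrow> (nat \<Rightarrow> nat) \<Rightarrow> (nat \<Rightarrow> real) \<Rightarrow> nat \<Rightarrow> real" where
  "dq_p m n q i s j = ext_s n s j + (qq m q (ext_i m n i (j+1)) - ext_s n s (j+1))
      + (\<Sum>l\<in>{ext_i m n i j<..<ext_i m n i (j+1)}. qq m q l)"

definition dq_pe :: "nat \<Rightarrow> nat \<Rightarrow> (nat \<Rightarrow> real) \<Rightarrow> (nat \<Rightarrow> real) \<Rightarrow> (nat \<Rightarrow> nat) \<Rightarrow> (nat \<Rightarrow> real) \<Rightarrow> nat \<Rightarrow> real" where
  "dq_pe m n q \<sigma> i s j = ext_s n s j * \<sigma> (ext_i m n i j)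
      + (qq m q (ext_i m n i (j+1)) - ext_s n s (j+1)) * \<sigma> (ext_i m n i (j+1))
      + (\<Sum>l\<in>{ext_i m n i j<..<ext_i m n i (j+1)}. qq m q l * \<sigma> l)"

text \<open>epsilon_j = (p_j epsilon_j) / p_j (irrelevant, = 0, when p_j = 0: such components carry no weight).\<close>
definition dq_eps :: "nat \<Rightarrow> nat \<Rightarrow> (nat \<Rightarrow> real) \<Rightarrow> (nat \<Rightarrow> real) \<Rightarrow> (nat \<Rightarrow> nat) \<Rightarrow> (nat \<Rightarrow> real) \<Rightarrow> nat \<Rightarrow> real" where
  "dq_eps m n q \<sigma> i s j = dq_pe m n q \<sigma> i s j / dq_p m n q i s j"

text \<open>D_Q(i_2..i_n; s_2..s_n); components with p_j = 0 have zero weight, so up to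
  equivalence this equals the sum over j with p_j > 0.\<close>
definition DQ :: "nat \<Rightarrow> nat \<Rightarrow> (nat \<Rightarrow> real) \<Rightarrow> (nat \<Rightarrow> real) \<Rightarrow> (nat \<Rightarrow> nat) \<Rightarrow> (nat \<Rightarrow> real) \<Rightarrow> bidmc" where
  "DQ m n q \<sigma> i s = bsc_mix n (dq_p m n q i s) (dq_eps m n q \<sigma> i s)"

definition valid_split :: "nat \<Rightarrow> nat \<Rightarrow> (nat \<Rightarrow> real) \<Rightarrow> (nat \<Rightarrow> nat) \<Rightarrow> (nat \<Rightarrow> real) \<Rightarrow> bool" where
  "valid_split m n q i s \<longleftrightarrow> 1 \<le> i 2 \<and> i n \<le> m
     \<and> (\<forall>j\<in>{2..n}. \<forall>j'\<in>{2..n}. j < j' \<longrightarrow> i j < i j')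
     \<and> (\<forall>j\<in>{2..n}. 0 \<le> s j \<and> s j \<le> q (i j))"

definition is_PStar_deg :: "nat \<Rightarrow> nat \<Rightarrow> (nat \<Rightarrow> real) \<Rightarrow> (nat \<Rightarrow> real) \<Rightarrow> (nat \<Rightarrow> nat) \<Rightarrow> (nat \<Rightarrow> real) \<Rightarrow> bool" where
  "is_PStar_deg m n q \<sigma> i s \<longleftrightarrow> valid_split m n q i s
     \<and> (\<forall>j\<in>{1..n}. 0 < dq_p m n q i s j)
     \<and> 0 \<le> dq_eps m n q \<sigma> i s 1
     \<and> (\<forall>j\<in>{1..n}. \<forall>j'\<in>{1..n}. j < j' \<longrightarrow> dq_eps m n q \<sigma> i s j < dq_eps m n q \<sigma> i s j')
     \<and> dq_eps m n q \<sigma> i s n \<le> 1/2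
     \<and> is_P_deg n (bsc_mix m q \<sigma>) (DQ m n q \<sigma> i s)
     \<and> (\<forall>j\<in>{1..n}. ext_i m n i (j+1) = ext_i m n i j + 1 \<longrightarrow>
          (ext_s n s j = 0 \<longrightarrow> ext_s n s (j+1) = 0)
        \<and> (ext_s n s (j+1) = qq m q (ext_i m n i (j+1)) \<longrightarrow> ext_s n s j = qq m q (ext_i m n i j)))"

definition phi :: "real \<Rightarrow> real \<Rightarrow> real" where
  "phi e1 e2 = ln ((1 - e1) / (1 - e2)) / ln (((1 - e1) * e2) / ((1 - e2) * e1))"

end

theory Submission
  imports Defs
begin

text \<open>A block of mass \<open>p\<close> and crossover \<open>\<epsilon>\<close>, described by the masses
  \<open>(a, b) = (p \<epsilon>, p (1 - \<epsilon>))\<close>, contributes \<open>a + b + neg_entropy a b / ln 2\<close> to the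
  symmetric capacity.

  Parts 1 and 2: \<open>\<epsilon>\<^sub>j\<close> is the average of the \<open>\<sigma>\<^sub>l\<close> over block \<open>j\<close>, weighted by the
  masses the block takes from the components \<open>q\<^sub>l B(\<sigma>\<^sub>l)\<close>. Hence \<open>\<epsilon>\<^sub>1 = 0\<close> forces every
  component of positive weight in the first block to have \<open>\<sigma>\<^sub>l = 0\<close>, which by strict
  monotonicity only \<open>l = 1\<close> can; symmetrically for \<open>\<epsilon>\<^sub>n = 1/2\<close> and \<open>l = m\<close>.

  Part 3: replacing \<open>s\<^sub>k\<close> by \<open>s\<^sub>k - t\<close> moves mass \<open>t\<close> of \<open>B(\<sigma>(i\<^sub>k))\<close> from block \<open>k\<close> to
  block \<open>k - 1\<close>. Gibbs' inequality \<open>a ln e + b ln (1 - e) \<le> neg_entropy a b\<close>, applied to the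
  new blocks at the old crossovers, bounds the gain in capacity from below by a positive
  multiple of \<open>t (\<phi>(\<epsilon>\<^sub>k\<^sub>-\<^sub>1, \<epsilon>\<^sub>k) - \<sigma>(i\<^sub>k))\<close>; it is strict because the two new
  crossovers cannot both equal the old ones.\<close>

definition neg_entropy :: "real \<Rightarrow> real \<Rightarrow> real" where
  "neg_entropy a b = a * ln (a / (a + b)) + b * ln (b / (a + b))"

lemma mult_ln_div_le:
  fixes a x :: real
  assumes "0 \<le> a" "0 < x"
  shows "a * ln (x / a) \<le> x - a"
    and "a \<noteq> x \<Longrightarrow> a * ln (x / a) < x - a"
proof -
  have "a * ln (x / a) \<le> x - a \<and> (a \<noteq> x \<longrightarrow> a * ln (x / a) < x - a)"
  proof (cases "a = 0")
    case True
    with assms show ?thesis by simp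
  next
    case False
    with assms have a: "0 < a" and xa: "0 < x / a" by simp_all
    have "ln (x / a) \<le> x / a - 1" using ln_le_minus_one[OF xa] .
    moreover have "ln (x / a) \<noteq> x / a - 1" if "a \<noteq> x"
      using ln_eq_minus_one[OF xa] that a by auto
    ultimately have "a * ln (x / a) \<le> a * (x / a - 1) \<and> (a \<noteq> x \<longrightarrow> a * ln (x / a) < a * (x / a - 1))"
      using a by (simp add: less_le)
    with a show ?thesis by (simp add: right_diff_distrib)
  qed
  then show "a * ln (x / a) \<le> x - a" and "a \<noteq> x \<Longrightarrow> a * ln (x / a) < x - a"
    by blast+
qed

lemma neg_entropy_ge:
  fixes a b e :: real
  assumes "0 \<le> a" "0 \<le> b" "0 < e" "e < 1"
  shows "a * ln e + b * ln (1 - e) \<le> neg_entropy a b"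
    and "a * (1 - e) \<noteq> b * e \<Longrightarrow> a * ln e + b * ln (1 - e) < neg_entropy a b"
proof -
  have "a * ln e + b * ln (1 - e) \<le> neg_entropy a b \<and>
    (a * (1 - e) \<noteq> b * e \<longrightarrow> a * ln e + b * ln (1 - e) < neg_entropy a b)"
  proof (cases "a + b = 0")
    case True
    with assms have "a = 0" "b = 0" by linarith+
    then show ?thesis by (simp add: neg_entropy_def)
  next
    case False
    with assms have S: "0 < a + b" by simp
    have split: "c * ln d - c * ln (c / (a + b)) = c * ln (d * (a + b) / c)"
      if "0 \<le> c" "0 < d" for c d
    proof (cases "c = 0")
      case False
      with that S have "ln (d * (a + b) / c) = ln d + ln (a + b) - ln c"
          and "ln (c / (a + b)) = ln c - ln (a + b)"
        by (simp_all add: ln_div ln_mult)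
      then have "ln d - ln (c / (a + b)) = ln (d * (a + b) / c)" by linarith
      then show ?thesis by (metis right_diff_distrib)
    qed simp
    have "a * ln e + b * ln (1 - e) - neg_entropy a b
        = a * ln (e * (a + b) / a) + b * ln ((1 - e) * (a + b) / b)"
      using split[of a e] split[of b "1 - e"] assms by (simp add: neg_entropy_def)
    moreover have "e * (a + b) - a + ((1 - e) * (a + b) - b) = 0"
      by (simp add: algebra_simps)
    moreover have "a \<noteq> e * (a + b)" if "a * (1 - e) \<noteq> b * e"
      using that by (simp add: algebra_simps)
    ultimately show ?thesis
      using mult_ln_div_le[of a "e * (a + b)"] mult_ln_div_le[of b "(1 - e) * (a + b)"] assms S
      by auto
  qed
  then show "a * ln e + b * ln (1 - e) \<le> neg_entropy a b"
    and "a * (1 - e) \<noteq> b * e \<Longrightarrow> a * ln e + b * ln (1 - e) < neg_entropy a b"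
    by blast+
qed

lemma neg_entropy_at_ratio:
  assumes "0 < P"
  shows "neg_entropy A (P - A) = A * ln (A / P) + (P - A) * ln (1 - A / P)"
proof -
  have "(P - A) / P = 1 - A / P" using assms by (simp add: field_simps)
  then show ?thesis by (simp add: neg_entropy_def)
qed

lemma phi_eq_ln_ratio:
  fixes e1 e2 :: real
  assumes "0 < e1" "e1 < e2" "e2 < 1"
  shows "phi e1 e2 = (ln (1 - e1) - ln (1 - e2)) / (ln (1 - e1) + ln e2 - ln (1 - e2) - ln e1)"
    and "0 < ln (1 - e1) + ln e2 - ln (1 - e2) - ln e1"
proof -
  have pos: "0 < 1 - e1" "0 < 1 - e2" "0 < e2" using assms by auto
  have "(1 - e2) * e1 < (1 - e1) * e2" using assms by (simp add: algebra_simps)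
  then have "0 < ln ((1 - e1) * e2 / ((1 - e2) * e1))"
    using pos assms(1) by simp
  moreover have "ln ((1 - e1) * e2 / ((1 - e2) * e1)) = ln (1 - e1) + ln e2 - ln (1 - e2) - ln e1"
    using pos assms(1) by (simp add: ln_div ln_mult)
  moreover have "ln ((1 - e1) / (1 - e2)) = ln (1 - e1) - ln (1 - e2)"
    using pos by (simp add: ln_div)
  ultimately show "phi e1 e2 = (ln (1 - e1) - ln (1 - e2)) / (ln (1 - e1) + ln e2 - ln (1 - e2) - ln e1)"
    and "0 < ln (1 - e1) + ln e2 - ln (1 - e2) - ln e1"
    by (simp_all add: phi_def)
qed

lemma neg_entropy_transfer_gt:
  fixes A1 P1 A2 P2 t x :: real
  assumes P: "0 < P1" "0 < P2"
    and e: "0 < A1 / P1" "A1 / P1 < A2 / P2" "A2 / P2 < 1"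
    and new1: "0 \<le> A1 + t * x" "A1 + t * x \<le> P1 + t"
    and new2: "0 \<le> A2 - t * x" "A2 - t * x \<le> P2 - t"
    and t: "t \<noteq> 0" "0 \<le> t * (phi (A1 / P1) (A2 / P2) - x)"
  shows "neg_entropy A1 (P1 - A1) + neg_entropy A2 (P2 - A2)
    < neg_entropy (A1 + t * x) (P1 + t - (A1 + t * x))
      + neg_entropy (A2 - t * x) (P2 - t - (A2 - t * x))"
proof -
  define e1 e2 where "e1 = A1 / P1" and "e2 = A2 / P2"
  define M L where "M = ln (1 - e1) - ln (1 - e2)"
    and "L = ln (1 - e1) + ln e2 - ln (1 - e2) - ln e1"
  have e1: "0 < e1" "e1 < 1" and e2: "0 < e2" "e2 < 1"
    using e by (simp_all add: e1_def e2_def)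
  have L: "0 < L" "phi e1 e2 = M / L"
    using phi_eq_ln_ratio[of e1 e2] e by (simp_all add: e1_def e2_def M_def L_def)
  then have "t * (M - x * L) = L * (t * (phi e1 e2 - x))"
    by (simp add: field_simps)
  also have "0 \<le> L * (t * (phi e1 e2 - x))"
    using L(1) t(2) by (simp add: e1_def e2_def)
  finally have gain: "0 \<le> t * (M - x * L)" .
  define a1 b1 a2 b2 where "a1 = A1 + t * x" and "b1 = P1 + t - (A1 + t * x)"
    and "a2 = A2 - t * x" and "b2 = P2 - t - (A2 - t * x)"
  have masses: "0 \<le> a1" "0 \<le> b1" "0 \<le> a2" "0 \<le> b2"
    using new1 new2 by (simp_all add: a1_def b1_def a2_def b2_def)
  have "A1 = e1 * P1" "A2 = e2 * P2"
    using P by (simp_all add: e1_def e2_def)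
  then have "a1 * (1 - e1) - b1 * e1 = t * (x - e1)" "a2 * (1 - e2) - b2 * e2 = t * (e2 - x)"
    by (simp_all add: a1_def b1_def a2_def b2_def algebra_simps)
  moreover have "t * (x - e1) \<noteq> 0 \<or> t * (e2 - x) \<noteq> 0"
    using t(1) e by (auto simp: e1_def e2_def)
  ultimately have "a1 * (1 - e1) \<noteq> b1 * e1 \<or> a2 * (1 - e2) \<noteq> b2 * e2"
    by auto
  then have "a1 * ln e1 + b1 * ln (1 - e1) + (a2 * ln e2 + b2 * ln (1 - e2))
      < neg_entropy a1 b1 + neg_entropy a2 b2"
    using neg_entropy_ge[OF masses(1,2) e1] neg_entropy_ge[OF masses(3,4) e2] by linarith
  moreover have "a1 * ln e1 + b1 * ln (1 - e1) + (a2 * ln e2 + b2 * ln (1 - e2))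
      = neg_entropy A1 (P1 - A1) + neg_entropy A2 (P2 - A2) + t * (M - x * L)"
    using neg_entropy_at_ratio[OF P(1), of A1] neg_entropy_at_ratio[OF P(2), of A2]
    by (simp add: a1_def b1_def a2_def b2_def e1_def e2_def M_def L_def algebra_simps)
  ultimately show ?thesis
    using gain by (simp add: a1_def b1_def a2_def b2_def)
qed

definition mi_summand :: "real \<Rightarrow> real \<Rightarrow> real" where
  "mi_summand u w = (if u = 0 then 0 else 1/2 * u * log 2 (u / w))"

lemma sym_cap_eq_sum_mi_summand:
  "sym_cap W = (\<Sum>y\<in>supp W. mi_summand (W 0 y) ((W 0 y + W 1 y) / 2)
                            + mi_summand (W 1 y) ((W 0 y + W 1 y) / 2))"
  unfolding sym_cap_def mi_summand_def One_nat_def by simp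

lemma mi_summand_eq:
  fixes u S :: real
  assumes "0 \<le> u" "u \<le> S"
  shows "mi_summand u (S / 2) = (u + u * ln (u / S) / ln 2) / 2"
proof (cases "u = 0")
  case False
  with assms have pos: "0 < u / S" by simp
  have "log 2 (u / (S / 2)) = log 2 (2 * (u / S))"
    by (simp only: times_divide_eq_right divide_divide_eq_right mult.commute)
  also have "\<dots> = 1 + ln (u / S) / ln 2"
    using pos by (subst log_mult) (auto simp: log_def)
  finally show ?thesis
    using False by (simp add: mi_summand_def field_simps)
qed (simp add: mi_summand_def)

lemma sym_cap_bsc_mix:
  assumes "\<forall>j\<in>{1..n}. 0 \<le> P j * E j \<and> 0 \<le> P j * (1 - E j)"
  shows "sym_cap (bsc_mix n P E)
    = (\<Sum>j\<in>{1..n}. P j + neg_entropy (P j * E j) (P j * (1 - E j)) / ln 2)"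
proof -
  define W where "W = bsc_mix n P E"
  define F where "F y = mi_summand (W 0 y) ((W 0 y + W 1 y) / 2)
    + mi_summand (W 1 y) ((W 0 y + W 1 y) / 2)" for y
  have "sym_cap W = sum F (supp W)"
    by (simp add: sym_cap_eq_sum_mi_summand F_def)
  also have "\<dots> = sum F {2*1..Suc (2*n)}"
    by (rule sum.mono_neutral_left)
      (auto simp: supp_def W_def bsc_mix_def F_def mi_summand_def split: if_splits)
  also have "\<dots> = (\<Sum>j\<in>{1..n}. F (2*j) + F (Suc (2*j)))"
    by (rule sum.in_pairs)
  also have "\<dots> = (\<Sum>j\<in>{1..n}. P j + neg_entropy (P j * E j) (P j * (1 - E j)) / ln 2)"
  proof (rule sum.cong[OF refl])
    fix j assume j: "j \<in> {1..n}"
    define a b where "a = P j * E j" and "b = P j * (1 - E j)"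
    have ab: "0 \<le> a" "0 \<le> b" "P j = a + b"
      using assms j by (auto simp: a_def b_def algebra_simps)
    have "W 0 (2*j) = b" "W 1 (2*j) = a" "W 0 (Suc (2*j)) = a" "W 1 (Suc (2*j)) = b"
      using j by (simp_all add: W_def bsc_mix_def a_def b_def)
    then have "F (2*j) + F (Suc (2*j)) = 2 * (mi_summand a ((a + b) / 2) + mi_summand b ((a + b) / 2))"
      by (simp add: F_def add.commute)
    also have "\<dots> = P j + neg_entropy a b / ln 2"
      using ab mi_summand_eq[of a "a + b"] mi_summand_eq[of b "a + b"]
      by (simp add: neg_entropy_def add_divide_distrib)
    finally show "F (2*j) + F (Suc (2*j)) = P j + neg_entropy (P j * E j) (P j * (1 - E j)) / ln 2"
      by (simp add: a_def b_def)
  qed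
  finally show ?thesis by (simp add: W_def)
qed

lemma sum_diff_two_points:
  fixes f g :: "'a \<Rightarrow> 'b::ab_group_add"
  assumes "finite A" "a \<in> A" "b \<in> A" "a \<noteq> b"
    and "\<And>j. j \<in> A \<Longrightarrow> j \<noteq> a \<Longrightarrow> j \<noteq> b \<Longrightarrow> g j = f j"
  shows "sum g A - sum f A = (g a - f a) + (g b - f b)"
proof -
  have "sum g A - sum f A = (\<Sum>j\<in>A. g j - f j)"
    by (simp add: sum_subtractf)
  also have "\<dots> = (\<Sum>j\<in>{a, b}. g j - f j)"
    by (rule sum.mono_neutral_right) (use assms in auto)
  finally show ?thesis
    using assms(4) by simp
qed

lemma valid_split_index_range:
  assumes "valid_split m n q i s" "j \<in> {2..n}"
  shows "1 \<le> i j" "i j \<le> m"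
proof -
  have "i 2 \<le> i j" "i j \<le> i n"
    using assms by (auto simp: valid_split_def le_less)
  with assms show "1 \<le> i j" "i j \<le> m"
    by (auto simp: valid_split_def)
qed

lemma valid_split_fun_upd:
  assumes "valid_split m n q i s" "0 \<le> v" "v \<le> q (i k)"
  shows "valid_split m n q i (s(k := v))"
  using assms by (auto simp: valid_split_def)

text \<open>\<open>\<Sum>\<^sub>l w\<^sub>j(l) g(l)\<close>, where \<open>w\<^sub>j(l)\<close> is the mass of \<open>q\<^sub>l B(\<sigma>\<^sub>l)\<close> assigned to
  block \<open>j\<close> of the splitting.\<close>
definition block_sum ::
    "nat \<Rightarrow> nat \<Rightarrow> (nat \<Rightarrow> real) \<Rightarrow> (nat \<Rightarrow> nat) \<Rightarrow> (nat \<Rightarrow> real) \<Rightarrow> (nat \<Rightarrow> real) \<Rightarrow> nat \<Rightarrow> real"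
  where
  "block_sum m n q i s g j = ext_s n s j * g (ext_i m n i j)
      + (qq m q (ext_i m n i (j+1)) - ext_s n s (j+1)) * g (ext_i m n i (j+1))
      + (\<Sum>l\<in>{ext_i m n i j<..<ext_i m n i (j+1)}. qq m q l * g l)"

lemma dq_p_eq_block_sum: "dq_p m n q i s j = block_sum m n q i s (\<lambda>_. 1) j"
  by (simp add: dq_p_def block_sum_def)

lemma dq_pe_eq_block_sum: "dq_pe m n q \<sigma> i s j = block_sum m n q i s \<sigma> j"
  by (simp add: dq_pe_def block_sum_def)

lemma half_dq_p_minus_dq_pe:
  "dq_p m n q i s j / 2 - dq_pe m n q \<sigma> i s j = block_sum m n q i s (\<lambda>l. 1/2 - \<sigma> l) j"
  by (simp add: dq_p_def dq_pe_def block_sum_def sum_subtractf sum_divide_distrib[symmetric]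
      algebra_simps add_divide_distrib diff_divide_distrib)

lemma block_sum_fun_upd:
  assumes "2 \<le> k" "k \<le> n"
  shows "block_sum m n q i (s(k := v)) g (k - 1) = block_sum m n q i s g (k - 1) + (s k - v) * g (i k)"
    and "block_sum m n q i (s(k := v)) g k = block_sum m n q i s g k - (s k - v) * g (i k)"
    and "j \<noteq> k - 1 \<Longrightarrow> j \<noteq> k \<Longrightarrow> block_sum m n q i (s(k := v)) g j = block_sum m n q i s g j"
proof -
  have "k - 1 + 1 = k" "k \<noteq> 1" "k \<noteq> n + 1" "k + 1 \<noteq> k"
    using assms by auto
  then show "block_sum m n q i (s(k := v)) g (k - 1) = block_sum m n q i s g (k - 1) + (s k - v) * g (i k)"
    and "block_sum m n q i (s(k := v)) g k = block_sum m n q i s g k - (s k - v) * g (i k)"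
    using assms by (auto simp: block_sum_def ext_s_def ext_i_def algebra_simps)
  assume "j \<noteq> k - 1" "j \<noteq> k"
  with assms have "j + 1 \<noteq> k" by auto
  with \<open>j \<noteq> k\<close> show "block_sum m n q i (s(k := v)) g j = block_sum m n q i s g j"
    by (simp add: block_sum_def ext_s_def)
qed

lemma PStar_deg_boundary_adjacent:
  assumes D: "is_PStar_deg m n q \<sigma> i s" and n: "2 \<le> n"
  shows "i 2 = 1 \<Longrightarrow> s 2 = 0"
    and "i n = m \<Longrightarrow> s n = q m"
proof -
  have vs: "valid_split m n q i s"
    and adj: "\<forall>j\<in>{1..n}. ext_i m n i (j+1) = ext_i m n i j + 1 \<longrightarrow>
          (ext_s n s j = 0 \<longrightarrow> ext_s n s (j+1) = 0)
        \<and> (ext_s n s (j+1) = qq m q (ext_i m n i (j+1)) \<longrightarrow> ext_s n s j = qq m q (ext_i m n i j))"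
    using D by (simp_all add: is_PStar_deg_def)
  show "s 2 = 0" if "i 2 = 1"
    using adj[rule_format, of 1, unfolded one_add_one] that n by (simp add: ext_i_def ext_s_def)
  show "s n = q m" if "i n = m"
  proof -
    have "1 \<le> m"
      using valid_split_index_range[OF vs, of n] n that by simp
    then show ?thesis
      using adj[rule_format, of n] that n by (simp add: ext_i_def ext_s_def qq_def)
  qed
qed

locale sorted_bsc_mix =
  fixes m :: nat and q \<sigma> :: "nat \<Rightarrow> real"
  assumes q_pos: "\<forall>l\<in>{1..m}. 0 < q l"
    and sigma_nonneg: "0 \<le> \<sigma> 1"
    and sigma_strict_mono: "\<forall>l\<in>{1..m}. \<forall>l'\<in>{1..m}. l < l' \<longrightarrow> \<sigma> l < \<sigma> l'"
    and sigma_le_half: "\<sigma> m \<le> 1/2"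
begin

lemma sigma_less: "1 \<le> l \<Longrightarrow> l < l' \<Longrightarrow> l' \<le> m \<Longrightarrow> \<sigma> l < \<sigma> l'"
  using sigma_strict_mono by auto

lemma sigma_range: "\<forall>l\<in>{1..m}. 0 \<le> \<sigma> l" "\<forall>l\<in>{1..m}. 0 \<le> 1/2 - \<sigma> l"
proof -
  have "0 \<le> \<sigma> l \<and> \<sigma> l \<le> 1/2" if "l \<in> {1..m}" for l
    using that sigma_less[of 1 l] sigma_less[of l m] sigma_nonneg sigma_le_half
    by (cases "l = 1"; cases "l = m") auto
  then show "\<forall>l\<in>{1..m}. 0 \<le> \<sigma> l" "\<forall>l\<in>{1..m}. 0 \<le> 1/2 - \<sigma> l"
    by auto
qed

lemma qq_mult_nonneg: "\<forall>l\<in>{1..m}. 0 \<le> g l \<Longrightarrow> 0 \<le> qq m q l * g l"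
  using q_pos by (auto simp: qq_def less_imp_le)

lemma block_sum_terms_nonneg:
  assumes vs: "valid_split m n q i s" and j: "j \<in> {1..n}"
    and g: "\<forall>l\<in>{1..m}. 0 \<le> g l"
  shows "0 \<le> ext_s n s j * g (ext_i m n i j)"
    and "0 \<le> (qq m q (ext_i m n i (j+1)) - ext_s n s (j+1)) * g (ext_i m n i (j+1))"
proof -
  have s: "0 \<le> s j'" "s j' \<le> q (i j')" "1 \<le> i j'" "i j' \<le> m" if "j' \<in> {2..n}" for j'
    using that vs valid_split_index_range[OF vs that] by (auto simp: valid_split_def)
  show "0 \<le> ext_s n s j * g (ext_i m n i j)"
    using j s[of j] g by (cases "j = 1") (auto simp: ext_s_def ext_i_def)
  show "0 \<le> (qq m q (ext_i m n i (j+1)) - ext_s n s (j+1)) * g (ext_i m n i (j+1))"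
    using j s[of "j+1"] g by (cases "j = n") (auto simp: ext_s_def ext_i_def qq_def)
qed

lemma block_sum_nonneg:
  assumes "valid_split m n q i s" "j \<in> {1..n}" "\<forall>l\<in>{1..m}. 0 \<le> g l"
  shows "0 \<le> block_sum m n q i s g j"
  using block_sum_terms_nonneg[OF assms] qq_mult_nonneg[OF assms(3)]
  by (simp add: block_sum_def sum_nonneg)

lemma block_sum_eq_0D:
  assumes "valid_split m n q i s" "j \<in> {1..n}" "\<forall>l\<in>{1..m}. 0 \<le> g l"
    and "block_sum m n q i s g j = 0"
  shows "ext_s n s j * g (ext_i m n i j) = 0"
    and "(qq m q (ext_i m n i (j+1)) - ext_s n s (j+1)) * g (ext_i m n i (j+1)) = 0"
    and "\<forall>l\<in>{ext_i m n i j<..<ext_i m n i (j+1)}. qq m q l * g l = 0"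
proof -
  note nonneg = block_sum_terms_nonneg[OF assms(1-3)] qq_mult_nonneg[OF assms(3)]
  have "0 \<le> (\<Sum>l\<in>{ext_i m n i j<..<ext_i m n i (j+1)}. qq m q l * g l)"
    using nonneg(3) by (simp add: sum_nonneg)
  with assms(4) nonneg(1,2) show "ext_s n s j * g (ext_i m n i j) = 0"
    and "(qq m q (ext_i m n i (j+1)) - ext_s n s (j+1)) * g (ext_i m n i (j+1)) = 0"
    and "\<forall>l\<in>{ext_i m n i j<..<ext_i m n i (j+1)}. qq m q l * g l = 0"
    unfolding block_sum_def by (simp_all add: sum_nonneg_eq_0_iff nonneg(3) add_nonneg_eq_0_iff)
qed

lemma dq_pe_bounds:
  assumes "valid_split m n q i s" "j \<in> {1..n}"
  shows "0 \<le> dq_pe m n q \<sigma> i s j" "dq_pe m n q \<sigma> i s j \<le> dq_p m n q i s j / 2"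
  using block_sum_nonneg[OF assms sigma_range(1)] block_sum_nonneg[OF assms sigma_range(2)]
  by (simp_all add: dq_pe_eq_block_sum half_dq_p_minus_dq_pe[symmetric])

lemma sym_cap_DQ:
  assumes vs: "valid_split m n q i s"
  shows "sym_cap (DQ m n q \<sigma> i s) = (\<Sum>j\<in>{1..n}. dq_p m n q i s j
      + neg_entropy (dq_pe m n q \<sigma> i s j) (dq_p m n q i s j - dq_pe m n q \<sigma> i s j) / ln 2)"
proof -
  have mass: "dq_p m n q i s j * dq_eps m n q \<sigma> i s j = dq_pe m n q \<sigma> i s j"
    "dq_p m n q i s j * (1 - dq_eps m n q \<sigma> i s j) = dq_p m n q i s j - dq_pe m n q \<sigma> i s j"
    if "j \<in> {1..n}" for j
    using dq_pe_bounds[OF vs that] by (auto simp: dq_eps_def right_diff_distrib)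
  have "sym_cap (DQ m n q \<sigma> i s) = (\<Sum>j\<in>{1..n}. dq_p m n q i s j
      + neg_entropy (dq_p m n q i s j * dq_eps m n q \<sigma> i s j)
          (dq_p m n q i s j * (1 - dq_eps m n q \<sigma> i s j)) / ln 2)"
    unfolding DQ_def by (rule sym_cap_bsc_mix) (use mass dq_pe_bounds[OF vs] in force)
  also have "\<dots> = (\<Sum>j\<in>{1..n}. dq_p m n q i s j
      + neg_entropy (dq_pe m n q \<sigma> i s j) (dq_p m n q i s j - dq_pe m n q \<sigma> i s j) / ln 2)"
    by (rule sum.cong) (simp_all add: mass)
  finally show ?thesis .
qed

lemma sym_cap_DQ_fun_upd_gt:
  assumes vs: "valid_split m n q i s" "valid_split m n q i (s(k := v))"
    and k: "2 \<le> k" "k \<le> n"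
    and p: "0 < dq_p m n q i s (k - 1)" "0 < dq_p m n q i s k"
    and e: "0 < dq_eps m n q \<sigma> i s (k - 1)" "dq_eps m n q \<sigma> i s (k - 1) < dq_eps m n q \<sigma> i s k"
      "dq_eps m n q \<sigma> i s k < 1"
    and t: "s k \<noteq> v"
      "0 \<le> (s k - v) * (phi (dq_eps m n q \<sigma> i s (k - 1)) (dq_eps m n q \<sigma> i s k) - \<sigma> (i k))"
  shows "sym_cap (DQ m n q \<sigma> i s) < sym_cap (DQ m n q \<sigma> i (s(k := v)))"
proof -
  define f where "f s' j = dq_p m n q i s' j
    + neg_entropy (dq_pe m n q \<sigma> i s' j) (dq_p m n q i s' j - dq_pe m n q \<sigma> i s' j) / ln 2" for s' j
  define P1 A1 P2 A2 where "P1 = dq_p m n q i s (k - 1)" and "A1 = dq_pe m n q \<sigma> i s (k - 1)"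
    and "P2 = dq_p m n q i s k" and "A2 = dq_pe m n q \<sigma> i s k"
  define t x where "t = s k - v" and "x = \<sigma> (i k)"
  note upd = block_sum_fun_upd[OF k, where s = s and v = v]
  have new: "dq_p m n q i (s(k := v)) (k - 1) = P1 + t" "dq_pe m n q \<sigma> i (s(k := v)) (k - 1) = A1 + t * x"
      "dq_p m n q i (s(k := v)) k = P2 - t" "dq_pe m n q \<sigma> i (s(k := v)) k = A2 - t * x"
    unfolding P1_def A1_def P2_def A2_def t_def x_def dq_p_eq_block_sum dq_pe_eq_block_sum upd(1,2)
    by simp_all
  have blocks: "k - 1 \<in> {1..n}" "k \<in> {1..n}" "k - 1 \<noteq> k"
    using k by auto
  have "sum (f (s(k := v))) {1..n} - sum (f s) {1..n}
      = (f (s(k := v)) (k - 1) - f s (k - 1)) + (f (s(k := v)) k - f s k)"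
    by (rule sum_diff_two_points)
      (use blocks in \<open>simp_all add: f_def dq_p_eq_block_sum dq_pe_eq_block_sum upd(3)\<close>)
  also have "\<dots> = (neg_entropy (A1 + t * x) (P1 + t - (A1 + t * x))
        + neg_entropy (A2 - t * x) (P2 - t - (A2 - t * x))
        - (neg_entropy A1 (P1 - A1) + neg_entropy A2 (P2 - A2))) / ln 2"
    unfolding f_def new P1_def[symmetric] A1_def[symmetric] P2_def[symmetric] A2_def[symmetric]
    by (simp add: diff_divide_distrib add_divide_distrib)
  also have "0 < \<dots>"
  proof -
    have "neg_entropy A1 (P1 - A1) + neg_entropy A2 (P2 - A2)
      < neg_entropy (A1 + t * x) (P1 + t - (A1 + t * x))
        + neg_entropy (A2 - t * x) (P2 - t - (A2 - t * x))"
      using dq_pe_bounds[OF vs(2) blocks(1), unfolded new]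
        dq_pe_bounds[OF vs(2) blocks(2), unfolded new] p e t
      by (intro neg_entropy_transfer_gt)
        (simp_all add: new P1_def A1_def P2_def A2_def t_def x_def dq_eps_def)
    then show ?thesis by simp
  qed
  finally show ?thesis
    using sym_cap_DQ[OF vs(1)] sym_cap_DQ[OF vs(2)] by (simp add: f_def)
qed

lemma PStar_deg_eps_eq_0:
  assumes D: "is_PStar_deg m n q \<sigma> i s" and n: "2 \<le> n" "n < m" and k: "2 \<le> k" "k \<le> n"
    and eps: "dq_eps m n q \<sigma> i s (k - 1) = 0"
  shows "k = 2 \<and> \<sigma> 1 = 0 \<and> dq_p m n q i s 1 = q 1
    \<and> ((i 2 = 2 \<and> s 2 = q 2) \<or> (i 2 = 1 \<and> s 2 = 0))"
proof -
  have vs: "valid_split m n q i s"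
    using D by (simp add: is_PStar_deg_def)
  have i2: "1 \<le> i 2" "i 2 \<le> m"
    using valid_split_index_range[OF vs, of 2] n by auto
  have mono: "\<forall>j\<in>{1..n}. \<forall>j'\<in>{1..n}. j < j' \<longrightarrow> dq_eps m n q \<sigma> i s j < dq_eps m n q \<sigma> i s j'"
    and "0 \<le> dq_eps m n q \<sigma> i s 1"
    using D by (simp_all add: is_PStar_deg_def)
  have k2: "k = 2"
  proof (rule ccontr)
    assume "k \<noteq> 2"
    with k have "1 \<in> {1..n}" "k - 1 \<in> {1..n}" "1 < k - 1"
      by auto
    with mono have "dq_eps m n q \<sigma> i s 1 < dq_eps m n q \<sigma> i s (k - 1)"
      by blast
    with eps \<open>0 \<le> dq_eps m n q \<sigma> i s 1\<close> show False by simp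
  qed
  moreover have "0 < dq_p m n q i s 1"
    using D n by (auto simp: is_PStar_deg_def)
  ultimately have "block_sum m n q i s \<sigma> 1 = 0"
    using eps by (simp add: dq_eps_def dq_pe_eq_block_sum)
  from block_sum_eq_0D[OF vs _ sigma_range(1) this, unfolded one_add_one] n i2
  have top: "(q (i 2) - s 2) * \<sigma> (i 2) = 0" and low: "\<forall>l\<in>{0<..<i 2}. q l * \<sigma> l = 0"
    by (simp_all add: ext_i_def ext_s_def qq_def)
  have p1: "dq_p m n q i s 1 = q (i 2) - s 2 + (\<Sum>l\<in>{0<..<i 2}. q l)"
    using n i2 unfolding dq_p_def one_add_one by (simp add: ext_i_def ext_s_def qq_def)
  have "0 < q 1" "0 < q 2" "0 < \<sigma> 2"
    using q_pos n sigma_less[of 1 2] sigma_nonneg by auto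
  with low i2 have "i 2 \<le> 2" "i 2 = 1 \<or> \<sigma> 1 = 0"
    by (auto simp: not_le dest: bspec[of _ _ 2] bspec[of _ _ 1])
  with i2 consider "i 2 = 1" | "i 2 = 2" "\<sigma> 1 = 0"
    by linarith
  then show ?thesis
  proof cases
    case 1
    then have "s 2 = 0"
      by (rule PStar_deg_boundary_adjacent(1)[OF D n(1)])
    moreover have "{0<..<1::nat} = {}" by auto
    ultimately show ?thesis
      using 1 top \<open>0 < q 1\<close> p1 k2 by simp
  next
    case 2
    with top \<open>0 < \<sigma> 2\<close> have "s 2 = q 2" by simp
    moreover have "{0<..<2::nat} = {1}" by auto
    ultimately show ?thesis
      using 2 p1 k2 by simp
  qed
qed

lemma PStar_deg_eps_eq_half:
  assumes D: "is_PStar_deg m n q \<sigma> i s" and n: "2 \<le> n" "n < m" and k: "2 \<le> k" "k \<le> n"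
    and eps: "dq_eps m n q \<sigma> i s k = 1/2"
  shows "k = n \<and> \<sigma> m = 1/2 \<and> dq_p m n q i s n = q m
    \<and> ((i n = m - 1 \<and> s n = 0) \<or> (i n = m \<and> s n = q m))"
proof -
  have vs: "valid_split m n q i s"
    using D by (simp add: is_PStar_deg_def)
  have i_n: "1 \<le> i n" "i n \<le> m"
    using valid_split_index_range[OF vs, of n] n by auto
  have mono: "\<forall>j\<in>{1..n}. \<forall>j'\<in>{1..n}. j < j' \<longrightarrow> dq_eps m n q \<sigma> i s j < dq_eps m n q \<sigma> i s j'"
    and "dq_eps m n q \<sigma> i s n \<le> 1/2"
    using D by (simp_all add: is_PStar_deg_def)
  have kn: "k = n"
  proof (rule ccontr)
    assume "k \<noteq> n"
    with k have "k \<in> {1..n}" "n \<in> {1..n}" "k < n"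
      by auto
    with mono have "dq_eps m n q \<sigma> i s k < dq_eps m n q \<sigma> i s n"
      by blast
    with eps \<open>dq_eps m n q \<sigma> i s n \<le> 1/2\<close> show False by simp
  qed
  moreover have "0 < dq_p m n q i s n"
    using D n by (auto simp: is_PStar_deg_def)
  ultimately have "dq_p m n q i s n / 2 - dq_pe m n q \<sigma> i s n = 0"
    using eps by (simp add: dq_eps_def field_simps)
  then have "block_sum m n q i s (\<lambda>l. 1/2 - \<sigma> l) n = 0"
    by (simp only: half_dq_p_minus_dq_pe)
  from block_sum_eq_0D[OF vs _ sigma_range(2) this] n i_n
  have top: "s n * (1/2 - \<sigma> (i n)) = 0" and high: "\<forall>l\<in>{i n<..<m+1}. q l * (1/2 - \<sigma> l) = 0"
    by (simp_all add: ext_i_def ext_s_def qq_def)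
  have pn: "dq_p m n q i s n = s n + (\<Sum>l\<in>{i n<..<m+1}. q l)"
    using n i_n by (simp add: dq_p_def ext_i_def ext_s_def qq_def)
  have "1 \<le> m - 1" using n by simp
  then have "0 < q m" "0 < q (m - 1)" "\<sigma> (m - 1) < 1/2"
    using q_pos sigma_less[of "m - 1" m] sigma_le_half by auto
  with high i_n have "m - 1 \<le> i n" "i n = m \<or> \<sigma> m = 1/2"
    by (auto simp: not_le dest: bspec[of _ _ "m - 1"] bspec[of _ _ m])
  with i_n consider "i n = m" | "i n = m - 1" "\<sigma> m = 1/2"
    by linarith
  then show ?thesis
  proof cases
    case 1
    then have "s n = q m"
      by (rule PStar_deg_boundary_adjacent(2)[OF D n(1)])
    moreover have "{m<..<m+1} = {}" by auto
    ultimately show ?thesis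
      using 1 top \<open>0 < q m\<close> pn kn by simp
  next
    case 2
    with top \<open>\<sigma> (m - 1) < 1/2\<close> have "s n = 0" by simp
    moreover have "{m - 1<..<m+1} = {m}" using n by auto
    ultimately show ?thesis
      using 2 pn kn by simp
  qed
qed

lemma PStar_deg_sym_cap_increase:
  assumes D: "is_PStar_deg m n q \<sigma> i s" and k: "2 \<le> k" "k \<le> n"
    and e: "0 < dq_eps m n q \<sigma> i s (k - 1)" "dq_eps m n q \<sigma> i s (k - 1) < dq_eps m n q \<sigma> i s k"
      "dq_eps m n q \<sigma> i s k < 1/2"
  shows "0 < s k \<Longrightarrow> \<sigma> (i k) \<le> phi (dq_eps m n q \<sigma> i s (k - 1)) (dq_eps m n q \<sigma> i s k) \<Longrightarrow>
      sym_cap (DQ m n q \<sigma> i s) < sym_cap (DQ m n q \<sigma> i (s(k := 0)))"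
    and "s k < q (i k) \<Longrightarrow> phi (dq_eps m n q \<sigma> i s (k - 1)) (dq_eps m n q \<sigma> i s k) \<le> \<sigma> (i k) \<Longrightarrow>
      sym_cap (DQ m n q \<sigma> i s) < sym_cap (DQ m n q \<sigma> i (s(k := q (i k))))"
proof -
  have vs: "valid_split m n q i s" and ppos: "\<forall>j\<in>{1..n}. 0 < dq_p m n q i s j"
    using D by (simp_all add: is_PStar_deg_def)
  have p: "0 < dq_p m n q i s (k - 1)" "0 < dq_p m n q i s k"
  proof -
    from k have "k - 1 \<in> {1..n}" "k \<in> {1..n}" by auto
    with ppos show "0 < dq_p m n q i s (k - 1)" "0 < dq_p m n q i s k" by blast+
  qed
  have sk: "0 \<le> s k" "s k \<le> q (i k)"
    using vs k by (auto simp: valid_split_def)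
  note gt = sym_cap_DQ_fun_upd_gt[OF vs _ k p e(1,2)]
  show "sym_cap (DQ m n q \<sigma> i s) < sym_cap (DQ m n q \<sigma> i (s(k := 0)))"
    if "0 < s k" "\<sigma> (i k) \<le> phi (dq_eps m n q \<sigma> i s (k - 1)) (dq_eps m n q \<sigma> i s k)"
    using that sk e(3) by (intro gt valid_split_fun_upd[OF vs]) simp_all
  show "sym_cap (DQ m n q \<sigma> i s) < sym_cap (DQ m n q \<sigma> i (s(k := q (i k))))"
    if "s k < q (i k)" "phi (dq_eps m n q \<sigma> i s (k - 1)) (dq_eps m n q \<sigma> i s k) \<le> \<sigma> (i k)"
    using that sk e(3) by (intro gt valid_split_fun_upd[OF vs] mult_nonpos_nonpos) simp_all
qed

end

theorem lemma8:
  fixes m n k :: nat and q \<sigma> :: "nat \<Rightarrow> real" and i :: "nat \<Rightarrow> nat" and s :: "nat \<Rightarrow> real"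
  assumes "2 \<le> n" and "n < m"
    and "\<forall>l\<in>{1..m}. 0 < q l" and "sum q {1..m} = 1"
    and "0 \<le> \<sigma> 1" and "\<forall>l\<in>{1..m}. \<forall>l'\<in>{1..m}. l < l' \<longrightarrow> \<sigma> l < \<sigma> l'" and "\<sigma> m \<le> 1/2"
    and "bsc_mix m q \<sigma> \<in> BB m - BB (m - 1)"
    and "is_PStar_deg m n q \<sigma> i s"
    and "2 \<le> k" and "k \<le> n"
  shows
    "(dq_eps m n q \<sigma> i s (k - 1) = 0 \<longrightarrow>
        k = 2 \<and> \<sigma> 1 = 0 \<and> dq_p m n q i s 1 = q 1
        \<and> ((i 2 = 2 \<and> s 2 = q 2) \<or> (i 2 = 1 \<and> s 2 = 0)))
   \<and> (dq_eps m n q \<sigma> i s k = 1/2 \<longrightarrow>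
        k = n \<and> \<sigma> m = 1/2 \<and> dq_p m n q i s n = q m
        \<and> ((i n = m - 1 \<and> s n = 0) \<or> (i n = m \<and> s n = q m)))
   \<and> (0 < dq_eps m n q \<sigma> i s (k - 1) \<and> dq_eps m n q \<sigma> i s (k - 1) < dq_eps m n q \<sigma> i s k
        \<and> dq_eps m n q \<sigma> i s k < 1/2 \<longrightarrow>
        (0 < s k \<and> \<sigma> (i k) \<le> phi (dq_eps m n q \<sigma> i s (k - 1)) (dq_eps m n q \<sigma> i s k) \<longrightarrow>
           sym_cap (DQ m n q \<sigma> i (s(k := 0))) > sym_cap (DQ m n q \<sigma> i s))
      \<and> (s k < q (i k) \<and> \<sigma> (i k) \<ge> phi (dq_eps m n q \<sigma> i s (k - 1)) (dq_eps m n q \<sigma> i s k) \<longrightarrow>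
           sym_cap (DQ m n q \<sigma> i (s(k := q (i k)))) > sym_cap (DQ m n q \<sigma> i s)))"
proof -
  interpret sorted_bsc_mix m q \<sigma>
    using assms(3,5-7) by unfold_locales
  show ?thesis
    using PStar_deg_eps_eq_0[OF assms(9,1,2,10,11)] PStar_deg_eps_eq_half[OF assms(9,1,2,10,11)]
      PStar_deg_sym_cap_increase[OF assms(9-11)]
    by blast
qed

end
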